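(* Let $i<s<j<t$ be indices in $[1,m+n]$. Then in $U_q$ the following identities hold: $$[E_{ij},F_{st}]=(q_j^{-1}-q_j)\,K_sK_j^{-1}\,F_{jt}E_{is},\qquad [E_{st},F_{ij}]=(q_j-q_j^{-1})\,F_{is}E_{jt}\,K_s^{-1}K_j .$$
   Context: Let $m,n\ge 1$, let $q$ be an indeterminate, and let indices range over $[1,m+n]=\{1,\dots,m+n\}$. Put $q_i=q$ if $i\le m$ and $q_i=q^{-1}$ if $i>m$. Let $\mathcal I_0=\{(i,j):1\le i<j\le m \text{ or } m+1\le i<j\le m+n\}$, $\mathcal I_1=\{(i,j):1\le i\le m<j\le m+n\}$. The quantum supergroup $U_q=U_q(\mathfrak{gl}(m|n))$ is the associative $\mathbb C(q)$-superalgebra generated by $K_j^{\pm1}$ ($j\in[1,m+n]$) and $E_{i,i+1},F_{i,i+1}$ ($1\le i<m+n$), where $K_j^{\pm1}$ and $E_{i,i+1},F_{i,i+1}$ for $i\ne m$ are even and $E_{m,m+1},F_{m,m+1}$ are odd, subject to: $K_iK_j=K_jK_i$, $K_iK_i^{-1}=1$; $K_iE_{j,j+1}K_i^{-1}=q_i^{\delta_{ij}-\delta_{i,j+1}}E_{j,j+1}$, $K_iF_{j,j+1}K_i^{-1}=q_i^{-(\delta_{ij}-\delta_{i,j+1})}F_{j,j+1}$; $[E_{i,i+1},F_{j,j+1}]=\delta_{ij}\frac{K_iK_{i+1}^{-1}-K_i^{-1}K_{i+1}}{q_i-q_i^{-1}}$; $E_{m,m+1}^2=F_{m,m+1}^2=0$;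 $E_{i,i+1}E_{j,j+1}=E_{j,j+1}E_{i,i+1}$ and $F_{i,i+1}F_{j,j+1}=F_{j,j+1}F_{i,i+1}$ for $|i-j|>1$; for $|i-j|=1$, $i\neq m$, and $X\in\{E,F\}$: $X_{i,i+1}^2X_{j,j+1}-(q+q^{-1})X_{i,i+1}X_{j,j+1}X_{i,i+1}+X_{j,j+1}X_{i,i+1}^2=0$; and $[E_{m-1,m+2},E_{m,m+1}]=[F_{m-1,m+2},F_{m,m+1}]=0$. Here for homogeneous $x,y$, $[x,y]=xy-(-1)^{\bar x\bar y}yx$ (super commutator, $\bar x$ the parity). For $i<j$ with $j>i+1$, elements $E_{ij},F_{ij}$ are defined recursively by $E_{ij}=E_{ic}E_{cj}-q_c^{-1}E_{cj}E_{ic}$ and $F_{ij}=-q_cF_{ic}F_{cj}+F_{cj}F_{ic}$ for $i<c<j$ (independent of the choice of $c$); $E_{ij},F_{ij}$ are odd if $(i,j)\in\mathcal I_1$ and even otherwise. *)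

theory Defs
  imports Complex_Main "HOL-Computational_Algebra.Polynomial" "HOL-Computational_Algebra.Fraction_Field"
begin

type_synonym cq = "complex poly fract"

definition qq :: cq where "qq = Fract [:0, 1:] 1"

definition qi :: "nat \<Rightarrow> nat \<Rightarrow> cq" where
  "qi m i = (if i \<le> m then qq else inverse qq)"

text \<open>Parity of E_ij / F_ij (i<j): odd iff (i,j) in I_1.\<close>
definition oddpair :: "nat \<Rightarrow> nat \<Rightarrow> nat \<Rightarrow> bool" where
  "oddpair m i j \<longleftrightarrow> i \<le> m \<and> m < j"

text \<open>Super commutator of homogeneous elements with given parities.\<close>
definition sbr :: "bool \<Rightarrow> bool \<Rightarrow> 'a::ring_1 \<Rightarrow> 'a \<Rightarrow> 'a" where
  "sbr px py x y = x * y - (if px \<and> py then -1 else 1) * (y * x)"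

text \<open>Generator e i stands for E_{i,i+1}, f i for F_{i,i+1}.
  Eg k i = E_{i,i+k+1}, defined recursively with c = i+1.\<close>
primrec Eg :: "nat \<Rightarrow> (cq \<Rightarrow> 'a::ring_1) \<Rightarrow> (nat \<Rightarrow> 'a) \<Rightarrow> nat \<Rightarrow> nat \<Rightarrow> 'a" where
  "Eg m emb e 0 i = e i"
| "Eg m emb e (Suc k) i =
     e i * Eg m emb e k (Suc i) - emb (inverse (qi m (Suc i))) * Eg m emb e k (Suc i) * e i"

primrec Fg :: "nat \<Rightarrow> (cq \<Rightarrow> 'a::ring_1) \<Rightarrow> (nat \<Rightarrow> 'a) \<Rightarrow> nat \<Rightarrow> nat \<Rightarrow> 'a" where
  "Fg m emb f 0 i = f i"
| "Fg m emb f (Suc k) i =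
     - emb (qi m (Suc i)) * f i * Fg m emb f k (Suc i) + Fg m emb f k (Suc i) * f i"

definition Eel :: "nat \<Rightarrow> (cq \<Rightarrow> 'a::ring_1) \<Rightarrow> (nat \<Rightarrow> 'a) \<Rightarrow> nat \<Rightarrow> nat \<Rightarrow> 'a" where
  "Eel m emb e i j = Eg m emb e (j - i - 1) i"

definition Fel :: "nat \<Rightarrow> (cq \<Rightarrow> 'a::ring_1) \<Rightarrow> (nat \<Rightarrow> 'a) \<Rightarrow> nat \<Rightarrow> nat \<Rightarrow> 'a" where
  "Fel m emb f i j = Fg m emb f (j - i - 1) i"

definition delta :: "nat \<Rightarrow> nat \<Rightarrow> int" where
  "delta i j = (if i = j then 1 else 0)"

text \<open>uq_alg m n emb K Ki e f: the ring 'a is a C(q)-algebra via the central ring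
  homomorphism emb, and the elements K j, Ki j (= K_j^{-1}), e i (= E_{i,i+1}),
  f i (= F_{i,i+1}) satisfy the defining relations of U_q(gl(m|n)).\<close>
definition uq_alg :: "nat \<Rightarrow> nat \<Rightarrow> (cq \<Rightarrow> 'a::ring_1) \<Rightarrow> (nat \<Rightarrow> 'a) \<Rightarrow> (nat \<Rightarrow> 'a)
    \<Rightarrow> (nat \<Rightarrow> 'a) \<Rightarrow> (nat \<Rightarrow> 'a) \<Rightarrow> bool" where
  "uq_alg m n emb K Ki e f \<longleftrightarrow>
    emb 1 = 1 \<and> (\<forall>a b. emb (a + b) = emb a + emb b) \<and> (\<forall>a b. emb (a * b) = emb a * emb b)
    \<and> (\<forall>a x. emb a * x = x * emb a)
    \<and> (\<forall>i\<in>{1..m+n}. \<forall>j\<in>{1..m+n}. K i * K j = K j * K i)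
    \<and> (\<forall>i\<in>{1..m+n}. K i * Ki i = 1 \<and> Ki i * K i = 1)
    \<and> (\<forall>i\<in>{1..m+n}. \<forall>j\<in>{1..<m+n}.
         K i * e j * Ki i = emb (qi m i powi (delta i j - delta i (j+1))) * e j
       \<and> K i * f j * Ki i = emb (qi m i powi (- (delta i j - delta i (j+1)))) * f j)
    \<and> (\<forall>i\<in>{1..<m+n}. \<forall>j\<in>{1..<m+n}.
         sbr (i = m) (j = m) (e i) (f j) =
           (if i = j then emb (inverse (qi m i - inverse (qi m i))) * (K i * Ki (i+1) - Ki i * K (i+1))
            else 0))
    \<and> e m * e m = 0 \<and> f m * f m = 0
    \<and> (\<forall>i\<in>{1..<m+n}. \<forall>j\<in>{1..<m+n}. (i + 1 < j \<or> j + 1 < i) \<longrightarrow>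
         e i * e j = e j * e i \<and> f i * f j = f j * f i)
    \<and> (\<forall>i\<in>{1..<m+n}. \<forall>j\<in>{1..<m+n}. (i + 1 = j \<or> j + 1 = i) \<and> i \<noteq> m \<longrightarrow>
         e i * e i * e j - emb (qq + inverse qq) * e i * e j * e i + e j * e i * e i = 0
       \<and> f i * f i * f j - emb (qq + inverse qq) * f i * f j * f i + f j * f i * f i = 0)
    \<and> (2 \<le> m \<and> 2 \<le> n \<longrightarrow>
         sbr True True (Eel m emb e (m - 1) (m + 2)) (e m) = 0
       \<and> sbr True True (Fel m emb f (m - 1) (m + 2)) (f m) = 0)"

end

theory Submission
  imports Defs
begin

text \<open>
  Write [x, y]_c = x y - c y x.  The root vectors satisfy E(a,b) = [e_a, E(a+1,b)]_c with
  c = 1/q_(a+1) and F(a,b) = [F(a+1,b), f_a]_c with c = q_(a+1), and conjugation by K_c multiplies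
  them by a power of q_c determined by their end points.  The first identity is proved together
  with the auxiliary identity [E(s,j), F(s,t)] = \<plusminus>K_s K_j^-1 F(j,t), with sign + iff E(s,j) is
  odd, by descending induction on s.  For j = s + 1 the auxiliary identity reduces to the relation
  between e_s and f_s.  Expanding E(s,j) along e_s turns the auxiliary identity at s + 1 into the
  first identity for i = s, and this in turn gives the auxiliary identity at s after expanding
  F(s,t) along f_s.  For i < s - 1 the first identity follows from the case i + 1 by expanding
  E(i,j) along e_i, which commutes with everything else involved.

  They are invariant under passing to the opposite ring while exchanging
  e and f, K and K^-1, q and q^-1; this symmetry maps E(i,j) to F(i,j), so the second identity is
  the image of the first.
\<close>

lemma qq_nonzero: "qq \<noteq> 0"
  by (simp add: qq_def Zero_fract_def eq_fract)

lemma qq_square_neq_1: "qq * qq \<noteq> 1"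
proof -
  have "coeff [:0, 0, 1::complex:] 2 \<noteq> coeff 1 2"
    by (simp add: numeral_2_eq_2)
  then have "[:0, 0, 1::complex:] \<noteq> 1"
    by metis
  then show ?thesis
    by (simp add: qq_def One_fract_def eq_fract)
qed

text \<open>The q_i over an arbitrary field, so that q can be replaced by q^-1.\<close>

definition q_at :: "'k::field \<Rightarrow> nat \<Rightarrow> nat \<Rightarrow> 'k" where
  "q_at q m i = (if i \<le> m then q else inverse q)"

lemma qi_eq_q_at: "qi m = q_at qq m"
  by (simp add: fun_eq_iff qi_def q_at_def)

lemma q_at_inverse: "q_at (inverse q) m i = inverse (q_at q m i)"
  by (simp add: q_at_def)

lemma q_at_nonzero: "q \<noteq> 0 \<Longrightarrow> q_at q m i \<noteq> 0"
  by (simp add: q_at_def)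

lemma q_at_bracket_nonzero:
  fixes q :: "'k::field"
  assumes "q \<noteq> 0" "q * q \<noteq> 1"
  shows "q_at q m s - inverse (q_at q m s) \<noteq> 0"
  using assms by (auto simp: q_at_def field_simps)

lemma crossing_coeff:
  fixes q :: "'k::field"
  assumes "q \<noteq> 0" "s < j"
  shows "(if oddpair m s j then 1 else -1) * (q_at q m s - inverse (q_at q m s))
    = inverse (q_at q m j) - q_at q m j"
  using assms by (auto simp: q_at_def oddpair_def field_simps)

lemma adjacent_coeff:
  fixes q :: "'k::field"
  assumes "q \<noteq> 0"
  shows "(if s = m then 1 else -1) * q_at q m (Suc s) * (q_at q m s - inverse (q_at q m s))
    = 1 - q_at q m (Suc s) * q_at q m (Suc s)"
  using assms by (auto simp: q_at_def field_simps)

lemma commutator_coeff: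
  fixes q :: "'k::field"
  assumes "q \<noteq> 0"
  shows "(if s = m then -1 else 1) * (q_at q m s - inverse (q_at q m s))
    = q_at q m (Suc s) - inverse (q_at q m (Suc s))"
  using assms by (auto simp: q_at_def field_simps)

lemma prod_powi_telescope:
  fixes x :: "'k::field"
  assumes "x \<noteq> 0" "a \<le> b"
  shows "(\<Prod>k = a..<b. x powi (g k - g (Suc k))) = x powi (g a - g b)"
  using assms(2)
proof (induction b rule: dec_induct)
  case (step b)
  then show ?case
    using assms(1) by (simp add: power_int_add[symmetric])
qed simp

definition ssign :: "bool \<Rightarrow> 'a::ring_1" where
  "ssign b = (if b then -1 else 1)"

lemma sbr_ssign: "sbr p q x y = x * y - ssign (p \<and> q) * (y * x)"
  by (simp add: sbr_def ssign_def)

lemma ssign_mult_commute: "ssign b * x = x * ssign b"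
  by (simp add: ssign_def)

lemma mult_ssign_left_commute: "x * (ssign b * y) = ssign b * (x * y)"
  by (simp add: ssign_def)

lemma sbr_parity_cong: "(p \<and> q \<longleftrightarrow> p' \<and> q') \<Longrightarrow> sbr p q x y = sbr p' q' x y"
  by (simp add: sbr_def)

lemma oddpair_adjacent: "oddpair m s (Suc s) \<longleftrightarrow> s = m"
  by (auto simp: oddpair_def)

lemma oddpair_Suc_left: "s < t \<Longrightarrow> oddpair m s t \<longleftrightarrow> (oddpair m (Suc s) t \<noteq> (s = m))"
  by (auto simp: oddpair_def)

section \<open>The opposite ring\<close>

datatype 'a opp = Opp (unop: 'a)

instantiation opp :: (ring_1) ring_1
begin

definition "0 = Opp 0"
definition "1 = Opp 1"
definition "x + y = Opp (unop x + unop y)"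
definition "x - y = Opp (unop x - unop y)"
definition "- x = Opp (- unop x)"
definition "x * y = Opp (unop y * unop x)"

instance
  by standard
    (simp_all add: opp.expand zero_opp_def one_opp_def plus_opp_def minus_opp_def
      uminus_opp_def times_opp_def algebra_simps)

end

lemma Opp_arith:
  "Opp 0 = 0" "Opp 1 = 1" "Opp x + Opp y = Opp (x + y)" "Opp x - Opp y = Opp (x - y)"
  "- Opp x = Opp (- x)" "Opp x * Opp y = Opp (y * x)"
  by (simp_all add: zero_opp_def one_opp_def plus_opp_def minus_opp_def uminus_opp_def times_opp_def)

lemma Opp_ssign: "ssign b = Opp (ssign b)"
  by (simp add: ssign_def uminus_opp_def one_opp_def)

lemma sbr_Opp: "sbr p q (Opp x) (Opp y) = Opp (sbr q p y x)"
  by (simp add: sbr_ssign Opp_arith Opp_ssign[of "p \<and> q"] ssign_mult_commute conj_commute)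

section \<open>Root vectors\<close>

primrec E_root ::
  "('k::field \<Rightarrow> 'a::ring_1) \<Rightarrow> (nat \<Rightarrow> 'k) \<Rightarrow> (nat \<Rightarrow> 'a) \<Rightarrow> nat \<Rightarrow> nat \<Rightarrow> 'a"
where
  "E_root emb qv e 0 i = e i"
| "E_root emb qv e (Suc k) i =
     e i * E_root emb qv e k (Suc i) - emb (inverse (qv (Suc i))) * E_root emb qv e k (Suc i) * e i"

primrec F_root ::
  "('k::field \<Rightarrow> 'a::ring_1) \<Rightarrow> (nat \<Rightarrow> 'k) \<Rightarrow> (nat \<Rightarrow> 'a) \<Rightarrow> nat \<Rightarrow> nat \<Rightarrow> 'a"
where
  "F_root emb qv f 0 i = f i"
| "F_root emb qv f (Suc k) i =
     - emb (qv (Suc i)) * f i * F_root emb qv f k (Suc i) + F_root emb qv f k (Suc i) * f i"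

lemma Eel_eq_E_root: "Eel m emb e i j = E_root emb (qi m) e (j - i - 1) i"
proof -
  have "Eg m emb e k a = E_root emb (qi m) e k a" for k a
    by (induction k arbitrary: a) simp_all
  then show ?thesis
    by (simp add: Eel_def)
qed

lemma Fel_eq_F_root: "Fel m emb f i j = F_root emb (qi m) f (j - i - 1) i"
proof -
  have "Fg m emb f k a = F_root emb (qi m) f k a" for k a
    by (induction k arbitrary: a) simp_all
  then show ?thesis
    by (simp add: Fel_def)
qed

lemma E_root_Opp:
  assumes "\<And>c x. emb c * x = x * emb c"
  shows "E_root (\<lambda>c. Opp (emb c)) (\<lambda>i. inverse (qv i)) (\<lambda>i. Opp (f i)) k i
    = Opp (F_root emb qv f k i)"
  using assms by (induction k arbitrary: i) (simp_all add: Opp_arith algebra_simps mult.assoc)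

lemma F_root_Opp:
  assumes "\<And>c x. emb c * x = x * emb c"
  shows "F_root (\<lambda>c. Opp (emb c)) (\<lambda>i. inverse (qv i)) (\<lambda>i. Opp (e i)) k i
    = Opp (E_root emb qv e k i)"
  using assms by (induction k arbitrary: i) (simp_all add: Opp_arith algebra_simps mult.assoc)

text \<open>Those relations of \<^const>\<open>uq_alg\<close> that enter the proof, for a general parameter \<open>q\<close>.\<close>

locale uq_relations =
  fixes m n :: nat and q :: "'k::field" and emb :: "'k \<Rightarrow> 'a::ring_1"
    and K Ki e f :: "nat \<Rightarrow> 'a"
  assumes q_nonzero: "q \<noteq> 0"
    and q_square_neq_1: "q * q \<noteq> 1"
    and emb_1: "emb 1 = 1"
    and emb_add: "emb (a + b) = emb a + emb b"
    and emb_mult: "emb (a * b) = emb a * emb b"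
    and emb_central: "emb a * x = x * emb a"
    and K_commute: "i \<in> {1..m+n} \<Longrightarrow> j \<in> {1..m+n} \<Longrightarrow> K i * K j = K j * K i"
    and K_Ki: "i \<in> {1..m+n} \<Longrightarrow> K i * Ki i = 1"
    and Ki_K: "i \<in> {1..m+n} \<Longrightarrow> Ki i * K i = 1"
    and K_e_Ki: "i \<in> {1..m+n} \<Longrightarrow> j \<in> {1..<m+n} \<Longrightarrow>
      K i * e j * Ki i = emb (q_at q m i powi (delta i j - delta i (j + 1))) * e j"
    and K_f_Ki: "i \<in> {1..m+n} \<Longrightarrow> j \<in> {1..<m+n} \<Longrightarrow>
      K i * f j * Ki i = emb (q_at q m i powi (- (delta i j - delta i (j + 1)))) * f j"
    and sbr_e_f: "i \<in> {1..<m+n} \<Longrightarrow> j \<in> {1..<m+n} \<Longrightarrow>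
      sbr (i = m) (j = m) (e i) (f j) =
        (if i = j
         then emb (inverse (q_at q m i - inverse (q_at q m i))) * (K i * Ki (i + 1) - Ki i * K (i + 1))
         else 0)"
    and e_e_far: "i \<in> {1..<m+n} \<Longrightarrow> j \<in> {1..<m+n} \<Longrightarrow> i + 1 < j \<or> j + 1 < i \<Longrightarrow>
      e i * e j = e j * e i"
    and f_f_far: "i \<in> {1..<m+n} \<Longrightarrow> j \<in> {1..<m+n} \<Longrightarrow> i + 1 < j \<or> j + 1 < i \<Longrightarrow>
      f i * f j = f j * f i"
begin

abbreviation qa :: "nat \<Rightarrow> 'k" where "qa \<equiv> q_at q m"

definition E :: "nat \<Rightarrow> nat \<Rightarrow> 'a" where "E a b = E_root emb qa e (b - a - 1) a"

definition F :: "nat \<Rightarrow> nat \<Rightarrow> 'a" where "F a b = F_root emb qa f (b - a - 1) a"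

definition smul :: "'k \<Rightarrow> 'a \<Rightarrow> 'a" where "smul c x = emb c * x"

lemma emb_0: "emb 0 = 0"
  using emb_add[of 0 0] by simp

lemma emb_minus: "emb (- a) = - emb a"
  using emb_add[of a "- a"] by (simp add: emb_0 add_eq_0_iff2)

lemma emb_diff: "emb (a - b) = emb a - emb b"
  using emb_add[of a "- b"] by (simp add: emb_minus)

lemma smul_mult_left [simp]: "smul c x * y = smul c (x * y)"
  by (simp add: smul_def mult.assoc)

lemma mult_smul [simp]: "x * smul c y = smul c (x * y)"
  by (metis emb_central mult.assoc smul_def)

lemma smul_smul [simp]: "smul c (smul d x) = smul (c * d) x"
  by (simp add: smul_def emb_mult mult.assoc)

lemma smul_1 [simp]: "smul 1 x = x"
  by (simp add: smul_def emb_1)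

lemma smul_zero [simp]: "smul c 0 = 0" "smul 0 x = 0"
  by (simp_all add: smul_def emb_0)

lemma smul_distribs:
  "smul c (x + y) = smul c x + smul c y" "smul c (x - y) = smul c x - smul c y"
  "smul c (- x) = - smul c x" "smul (c + d) x = smul c x + smul d x"
  "smul (c - d) x = smul c x - smul d x" "smul (- c) x = - smul c x"
  by (simp_all add: smul_def emb_add emb_minus emb_diff algebra_simps)

definition qcomm :: "'k \<Rightarrow> 'a \<Rightarrow> 'a \<Rightarrow> 'a" where
  "qcomm c x y = x * y - smul c (y * x)"

lemma qcomm_distribs:
  "qcomm c x (y - z) = qcomm c x y - qcomm c x z" "qcomm c x (smul d y) = smul d (qcomm c x y)"
  by (simp_all add: qcomm_def smul_distribs algebra_simps mult.commute)

lemma qcomm_distribs_left: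
  "qcomm c (x - y) z = qcomm c x z - qcomm c y z" "qcomm c (smul d x) z = smul d (qcomm c x z)"
  by (simp_all add: qcomm_def smul_distribs algebra_simps mult.commute)

lemma qcomm_mult_commute: "x * p = p * x \<Longrightarrow> qcomm c x (p * y) = p * qcomm c x y"
  by (simp add: qcomm_def algebra_simps flip: mult.assoc)

lemma sbr_qcomm_left:
  assumes "x * z = z * x"
  shows "sbr px py (qcomm c x y) z = qcomm c x (sbr px py y z)"
proof -
  have "x * (z * w) = z * (x * w)" for w
    by (simp add: assms flip: mult.assoc)
  with assms show ?thesis
    by (simp add: sbr_def qcomm_def smul_distribs algebra_simps)
qed

lemma sbr_qcomm_left':
  assumes "y * z = z * y"
  shows "sbr px py (qcomm c x y) z = qcomm c (sbr px py x z) y"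
proof -
  have "z * (y * w) = y * (z * w)" for w
    by (simp add: assms flip: mult.assoc)
  with assms show ?thesis
    by (simp add: sbr_def qcomm_def smul_distribs algebra_simps)
qed

text \<open>A super Leibniz rule; qy and qz are the parities of y and z.\<close>

lemma sbr_qcomm_right:
  "sbr p (qy \<noteq> qz) x (qcomm c y z) =
     sbr p qy x y * z + ssign (p \<and> qy) * (y * sbr p qz x z)
     - smul c (sbr p qz x z * y + ssign (p \<and> qz) * (z * sbr p qy x y))"
  by (cases p; cases qy; cases qz) (simp_all add: sbr_ssign ssign_def qcomm_def smul_distribs algebra_simps)

lemma E_adjacent: "E a (Suc a) = e a"
  by (simp add: E_def)

lemma F_adjacent: "F a (Suc a) = f a"
  by (simp add: F_def)

lemma E_Suc_left:
  assumes "Suc a < b"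
  shows "E a b = qcomm (inverse (qa (Suc a))) (e a) (E (Suc a) b)"
proof -
  have "b - a - 1 = Suc (b - Suc a - 1)"
    using assms by simp
  then show ?thesis
    by (simp add: E_def qcomm_def smul_def mult.assoc)
qed

lemma F_Suc_left:
  assumes "Suc a < b"
  shows "F a b = qcomm (qa (Suc a)) (F (Suc a) b) (f a)"
proof -
  have "b - a - 1 = Suc (b - Suc a - 1)"
    using assms by simp
  then show ?thesis
    by (simp add: F_def qcomm_def smul_def mult.assoc)
qed

definition skew_commute :: "'k \<Rightarrow> 'a \<Rightarrow> 'a \<Rightarrow> bool" where
  "skew_commute w y x \<longleftrightarrow> y * x = smul w (x * y)"

lemma skew_commute_1: "skew_commute 1 y x \<longleftrightarrow> y * x = x * y"
  by (simp add: skew_commute_def)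

lemma skew_commute_swap:
  assumes "skew_commute w y x"
  shows "y * x = smul w (x * y)" "y * (x * z) = smul w (x * (y * z))"
  using assms unfolding skew_commute_def by (metis mult.assoc smul_mult_left)+

lemma skew_commute_sym: "w \<noteq> 0 \<Longrightarrow> skew_commute w y x \<Longrightarrow> skew_commute (inverse w) x y"
  by (simp add: skew_commute_def)

lemma skew_commute_mult_right:
  "skew_commute v y x \<Longrightarrow> skew_commute w y x' \<Longrightarrow> skew_commute (v * w) y (x * x')"
  unfolding skew_commute_def by (metis mult.assoc mult_smul smul_mult_left smul_smul)

lemma skew_commute_mult_left:
  "skew_commute v y x \<Longrightarrow> skew_commute w y' x \<Longrightarrow> skew_commute (v * w) (y * y') x"
  unfolding skew_commute_def by (metis mult.assoc mult.commute mult_smul smul_mult_left smul_smul)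

lemma skew_commute_qcomm:
  "skew_commute v y x \<Longrightarrow> skew_commute w y z \<Longrightarrow> skew_commute (v * w) y (qcomm c x z)"
  using skew_commute_mult_right[of v y x w z] skew_commute_mult_right[of w y z v x]
  by (simp add: skew_commute_def qcomm_def smul_distribs algebra_simps mult.commute)

lemma skew_commute_inverse:
  assumes "y * y' = 1" "y' * y = 1" "w \<noteq> 0" "skew_commute w y x"
  shows "skew_commute (inverse w) y' x"
proof -
  have "y' * x = y' * (x * y) * y'"
    by (simp add: mult.assoc assms(1))
  also have "\<dots> = smul (inverse w) (y' * y * x * y')"
    using assms(3,4) by (simp add: skew_commute_def mult.assoc)
  finally show ?thesis
    by (simp add: skew_commute_def assms(2))
qed

lemma qcomm_skew_commute: "skew_commute w x y \<Longrightarrow> qcomm c x y = smul (w - c) (y * x)"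
  by (simp add: skew_commute_def qcomm_def smul_distribs)

lemma qcomm_skew_commute_swapped: "skew_commute w y x \<Longrightarrow> qcomm c x y = smul (1 - c * w) (x * y)"
  by (simp add: skew_commute_def qcomm_def smul_distribs)

lemma Ki_K_commute:
  assumes "i \<in> {1..m+n}" "j \<in> {1..m+n}"
  shows "skew_commute 1 (Ki i) (K j)"
  using skew_commute_inverse[OF K_Ki[OF assms(1)] Ki_K[OF assms(1)], of 1 "K j"] K_commute[OF assms]
  by (simp add: skew_commute_1)

lemma Ki_Ki_commute:
  assumes "i \<in> {1..m+n}" "j \<in> {1..m+n}"
  shows "skew_commute 1 (Ki i) (Ki j)"
  using skew_commute_inverse[OF K_Ki[OF assms(2)] Ki_K[OF assms(2)], of 1 "Ki i"] Ki_K_commute[OF assms]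
  by (simp add: skew_commute_1)

lemma skew_commute_E:
  assumes "a < b" "\<And>k. a \<le> k \<Longrightarrow> k < b \<Longrightarrow> skew_commute (w k) y (e k)"
  shows "skew_commute (\<Prod>k = a..<b. w k) y (E a b)"
proof -
  obtain c where b: "b = Suc c"
    using assms(1) by (cases b) auto
  have "a \<le> c"
    using assms(1) b by simp
  then show ?thesis
    unfolding b
  proof (induction a rule: inc_induct)
    case base
    then show ?case
      using assms b by (simp add: E_adjacent)
  next
    case (step k)
    then have "skew_commute (w k * (\<Prod>k = Suc k..<Suc c. w k)) y (E k (Suc c))"
      using assms b by (simp add: E_Suc_left skew_commute_qcomm)
    then show ?case
      using step.hyps by (simp add: prod.atLeast_Suc_lessThan mult_ac)
  qed
qed

lemma skew_commute_F:
  assumes "a < b" "\<And>k. a \<le> k \<Longrightarrow> k < b \<Longrightarrow> skew_commute (w k) y (f k)"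
  shows "skew_commute (\<Prod>k = a..<b. w k) y (F a b)"
proof -
  obtain c where b: "b = Suc c"
    using assms(1) by (cases b) auto
  have "a \<le> c"
    using assms(1) b by simp
  then show ?thesis
    unfolding b
  proof (induction a rule: inc_induct)
    case base
    then show ?case
      using assms b by (simp add: F_adjacent)
  next
    case (step k)
    then have "skew_commute ((\<Prod>k = Suc k..<Suc c. w k) * w k) y (F k (Suc c))"
      using assms b by (simp add: F_Suc_left skew_commute_qcomm)
    then show ?case
      using step.hyps by (simp add: prod.atLeast_Suc_lessThan mult_ac)
  qed
qed

lemma K_e_skew_commute:
  assumes "a \<in> {1..m+n}" "k \<in> {1..<m+n}"
  shows "skew_commute (qa a powi (delta a k - delta a (Suc k))) (K a) (e k)"
proof -
  have "K a * e k = (K a * e k * Ki a) * K a"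
    using assms(1) by (simp add: mult.assoc Ki_K)
  also have "\<dots> = emb (qa a powi (delta a k - delta a (Suc k))) * e k * K a"
    using K_e_Ki[OF assms] by simp
  finally show ?thesis
    by (simp add: skew_commute_def smul_def mult.assoc)
qed

lemma K_f_skew_commute:
  assumes "a \<in> {1..m+n}" "k \<in> {1..<m+n}"
  shows "skew_commute (qa a powi (delta a (Suc k) - delta a k)) (K a) (f k)"
proof -
  have "K a * f k = (K a * f k * Ki a) * K a"
    using assms(1) by (simp add: mult.assoc Ki_K)
  also have "\<dots> = emb (qa a powi (delta a (Suc k) - delta a k)) * f k * K a"
    using K_f_Ki[OF assms] by simp
  finally show ?thesis
    by (simp add: skew_commute_def smul_def mult.assoc)
qed

lemma K_E_skew_commute:
  assumes "a \<in> {1..m+n}" "1 \<le> b" "b < c" "c \<le> m + n"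
  shows "skew_commute (qa a powi (delta a b - delta a c)) (K a) (E b c)"
  using skew_commute_E[of b c "\<lambda>k. qa a powi (delta a k - delta a (Suc k))"] assms
    prod_powi_telescope[of "qa a" b c "delta a"]
  by (simp add: K_e_skew_commute q_at_nonzero q_nonzero)

lemma K_F_skew_commute:
  assumes "a \<in> {1..m+n}" "1 \<le> b" "b < c" "c \<le> m + n"
  shows "skew_commute (qa a powi (delta a c - delta a b)) (K a) (F b c)"
  using skew_commute_F[of b c "\<lambda>k. qa a powi (delta a (Suc k) - delta a k)"] assms
    prod_powi_telescope[of "qa a" b c "\<lambda>k. - delta a k"]
  by (simp add: K_f_skew_commute q_at_nonzero q_nonzero)

lemma Ki_E_skew_commute:
  assumes "a \<in> {1..m+n}" "1 \<le> b" "b < c" "c \<le> m + n"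
  shows "skew_commute (qa a powi (delta a c - delta a b)) (Ki a) (E b c)"
  using skew_commute_inverse[OF K_Ki Ki_K _ K_E_skew_commute] assms
  by (simp add: q_at_nonzero q_nonzero flip: power_int_minus)

lemma Ki_F_skew_commute:
  assumes "a \<in> {1..m+n}" "1 \<le> b" "b < c" "c \<le> m + n"
  shows "skew_commute (qa a powi (delta a b - delta a c)) (Ki a) (F b c)"
  using skew_commute_inverse[OF K_Ki Ki_K _ K_F_skew_commute] assms
  by (simp add: q_at_nonzero q_nonzero flip: power_int_minus)

lemma e_f_commute:
  assumes "a \<in> {1..<m+n}" "k \<in> {1..<m+n}" "a \<noteq> k"
  shows "e a * f k = f k * e a"
  using sbr_e_f[OF assms(1,2)] assms(3) by (auto simp: sbr_def)

lemma e_F_commute: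
  assumes "a \<in> {1..<m+n}" "1 \<le> b" "b < c" "c \<le> m + n" "a < b \<or> c \<le> a"
  shows "e a * F b c = F b c * e a"
proof -
  have "skew_commute (\<Prod>k = b..<c. 1) (e a) (F b c)"
    by (rule skew_commute_F) (use assms in \<open>auto simp: skew_commute_1 intro!: e_f_commute\<close>)
  then show ?thesis
    by (simp add: skew_commute_1)
qed

lemma f_E_commute:
  assumes "a \<in> {1..<m+n}" "1 \<le> b" "b < c" "c \<le> m + n" "a < b \<or> c \<le> a"
  shows "f a * E b c = E b c * f a"
proof -
  have "skew_commute (\<Prod>k = b..<c. 1) (f a) (E b c)"
    by (rule skew_commute_E) (use assms in \<open>auto simp: skew_commute_1 intro!: e_f_commute[symmetric]\<close>)
  then show ?thesis
    by (simp add: skew_commute_1)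
qed

lemma f_F_commute:
  assumes "a \<in> {1..<m+n}" "1 \<le> b" "b < c" "c \<le> m + n" "a + 1 < b \<or> c < a"
  shows "f a * F b c = F b c * f a"
proof -
  have "skew_commute (\<Prod>k = b..<c. 1) (f a) (F b c)"
    by (rule skew_commute_F) (use assms in \<open>auto simp: skew_commute_1 intro!: f_f_far\<close>)
  then show ?thesis
    by (simp add: skew_commute_1)
qed

lemma sbr_e_f_same:
  assumes "a \<in> {1..<m+n}"
  shows "sbr (a = m) (a = m) (e a) (f a) =
    smul (inverse (qa a - inverse (qa a))) (K a * Ki (Suc a) - Ki a * K (Suc a))"
  using sbr_e_f[OF assms assms] by (simp add: smul_def)

lemma e_skew_commute_K_Ki_F:
  assumes "1 \<le> i" "i < s" "s < j" "j < t" "t \<le> m + n"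
  shows "skew_commute (qa s powi delta s (Suc i)) (e i) (K s * Ki j * F j t)"
proof -
  have "skew_commute (qa s powi delta s (Suc i) * 1 * 1) (e i) (K s * Ki j * F j t)"
  proof (intro skew_commute_mult_right)
    show "skew_commute (qa s powi delta s (Suc i)) (e i) (K s)"
      using skew_commute_sym[OF _ K_e_skew_commute[of s i]] assms
      by (cases "s = Suc i") (simp_all add: delta_def q_at_nonzero q_nonzero)
    show "skew_commute 1 (e i) (Ki j)"
      using skew_commute_sym[OF _ Ki_E_skew_commute[of j i "Suc i"]] assms
      by (simp add: delta_def E_adjacent)
    show "skew_commute 1 (e i) (F j t)"
      using e_F_commute[of i j t] assms by (simp add: skew_commute_1)
  qed
  then show ?thesis
    by simp
qed

lemma f_skew_commute_K_Ki_F: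
  assumes "1 \<le> i" "i < s" "s < j" "j < t" "t \<le> m + n"
  shows "skew_commute (qa s powi - delta s (Suc i)) (f i) (K s * Ki j * F j t)"
proof -
  have "skew_commute (qa s powi - delta s (Suc i) * 1 * 1) (f i) (K s * Ki j * F j t)"
  proof (intro skew_commute_mult_right)
    show "skew_commute (qa s powi - delta s (Suc i)) (f i) (K s)"
      using skew_commute_sym[OF _ K_f_skew_commute[of s i]] assms
      by (cases "s = Suc i") (simp_all add: delta_def q_at_nonzero q_nonzero)
    show "skew_commute 1 (f i) (Ki j)"
      using skew_commute_sym[OF _ Ki_F_skew_commute[of j i "Suc i"]] assms
      by (simp add: delta_def F_adjacent)
    show "skew_commute 1 (f i) (F j t)"
      using f_F_commute[of i j t] assms by (simp add: skew_commute_1)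
  qed
  then show ?thesis
    by simp
qed

lemma K_Ki_F_times_K_Ki:
  assumes "1 \<le> a" "a < j" "1 \<le> b" "b < j" "j < t" "t \<le> m + n"
  shows "K b * Ki j * F j t * (K a * Ki b) = K a * Ki j * F j t"
proof -
  have "skew_commute 1 (K a) (Ki j)" "skew_commute 1 (Ki b) (Ki j)"
    using skew_commute_sym[OF _ Ki_K_commute[of j a]] Ki_Ki_commute[of b j] assms by simp_all
  moreover have "skew_commute 1 (K a) (F j t)" "skew_commute 1 (Ki b) (F j t)"
    using K_F_skew_commute[of a j t] Ki_F_skew_commute[of b j t] assms by (simp_all add: delta_def)
  ultimately have "skew_commute ((1 * 1) * (1 * 1)) (K a * Ki b) (Ki j * F j t)"
    by (intro skew_commute_mult_left skew_commute_mult_right)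
  then have "K b * Ki j * F j t * (K a * Ki b) = K b * K a * Ki b * (Ki j * F j t)"
    by (simp add: skew_commute_1 mult.assoc)
  also have "\<dots> = K a * (K b * Ki b) * (Ki j * F j t)"
    using K_commute[of b a] assms by (simp add: mult.assoc)
  finally show ?thesis
    using K_Ki[of b] assms by (simp add: mult.assoc)
qed

section \<open>The first identity\<close>

definition crossing_rel :: "nat \<Rightarrow> nat \<Rightarrow> nat \<Rightarrow> nat \<Rightarrow> bool" where
  "crossing_rel i s j t \<longleftrightarrow> sbr (oddpair m i j) (oddpair m s t) (E i j) (F s t) =
     smul (inverse (qa j) - qa j) (K s * Ki j * F j t * E i s)"

definition common_start_rel :: "nat \<Rightarrow> nat \<Rightarrow> nat \<Rightarrow> bool" where
  "common_start_rel s j t \<longleftrightarrow> sbr (oddpair m s j) (oddpair m s t) (E s j) (F s t) =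
     smul (if oddpair m s j then 1 else -1) (K s * Ki j * F j t)"

lemma crossing_rel_Suc_left:
  assumes "1 \<le> i" "Suc i < s" "s < j" "j < t" "t \<le> m + n" "crossing_rel (Suc i) s j t"
  shows "crossing_rel i s j t"
proof -
  let ?c = "inverse (qa (Suc i))" and ?l = "inverse (qa j) - qa j" and ?P = "K s * Ki j * F j t"
  have e_F: "e i * F s t = F s t * e i"
    using assms by (intro e_F_commute) auto
  have e_P: "e i * ?P = ?P * e i"
    using e_skew_commute_K_Ki_F[of i s j t] assms by (simp add: delta_def skew_commute_1)
  have "sbr (oddpair m i j) (oddpair m s t) (E i j) (F s t)
      = sbr (oddpair m (Suc i) j) (oddpair m s t) (qcomm ?c (e i) (E (Suc i) j)) (F s t)"
    using assms by (auto simp: E_Suc_left oddpair_def intro: sbr_parity_cong)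
  also have "\<dots> = qcomm ?c (e i) (smul ?l (?P * E (Suc i) s))"
    using assms(6) by (simp add: sbr_qcomm_left[OF e_F] crossing_rel_def)
  also have "\<dots> = smul ?l (?P * E i s)"
    using assms by (simp add: qcomm_distribs qcomm_mult_commute[OF e_P] E_Suc_left)
  finally show ?thesis
    unfolding crossing_rel_def .
qed

lemma crossing_rel_adjacent:
  assumes "1 \<le> i" "Suc i < j" "j < t" "t \<le> m + n" "common_start_rel (Suc i) j t"
  shows "crossing_rel i (Suc i) j t"
proof -
  let ?s = "Suc i" and ?l = "inverse (qa j) - qa j"
  let ?c = "inverse (qa ?s)" and ?\<mu> = "if oddpair m ?s j then 1 else -1" and ?P = "K ?s * Ki j * F j t"
  have e_F: "e i * F ?s t = F ?s t * e i"
    using assms by (intro e_F_commute) auto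
  have e_P: "skew_commute (qa ?s) (e i) ?P"
    using e_skew_commute_K_Ki_F[of i ?s j t] assms by (simp add: delta_def)
  have "sbr (oddpair m i j) (oddpair m ?s t) (E i j) (F ?s t)
      = sbr (oddpair m ?s j) (oddpair m ?s t) (qcomm ?c (e i) (E ?s j)) (F ?s t)"
    using assms by (auto simp: E_Suc_left oddpair_def intro: sbr_parity_cong)
  also have "\<dots> = qcomm ?c (e i) (smul ?\<mu> ?P)"
    using assms(5) by (simp add: sbr_qcomm_left[OF e_F] common_start_rel_def)
  also have "\<dots> = smul (?\<mu> * (qa ?s - ?c)) (?P * e i)"
    by (simp add: qcomm_distribs qcomm_skew_commute[OF e_P])
  also have "?\<mu> * (qa ?s - ?c) = ?l"
    using crossing_coeff[OF q_nonzero, of ?s j m] assms by simp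
  finally show ?thesis
    unfolding crossing_rel_def by (simp add: E_adjacent)
qed

lemma common_start_rel_adjacent:
  assumes "1 \<le> s" "Suc s < t" "t \<le> m + n"
  shows "common_start_rel s (Suc s) t"
proof -
  let ?s1 = "Suc s" and ?G = "F (Suc s) t" and ?q1 = "qa (Suc s)"
  let ?d = "inverse (qa s - inverse (qa s))" and ?P1 = "K s * Ki ?s1" and ?P2 = "Ki s * K ?s1"
  let ?H = "sbr (s = m) (s = m) (e s) (f s)"
  have q1: "?q1 \<noteq> 0"
    by (simp add: q_at_nonzero q_nonzero)
  have even_G: "\<not> (s = m \<and> oddpair m ?s1 t)"
    by (simp add: oddpair_def)
  have e_G: "sbr (s = m) (oddpair m ?s1 t) (e s) ?G = 0"
    using e_F_commute[of s ?s1 t] assms even_G by (auto simp: sbr_def)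
  have P1_G: "skew_commute (1 * ?q1) ?P1 ?G"
    using K_F_skew_commute[of s ?s1 t] Ki_F_skew_commute[of ?s1 ?s1 t] assms
    by (intro skew_commute_mult_left) (auto simp: delta_def)
  have P2_G: "skew_commute (1 * inverse ?q1) ?P2 ?G"
    using Ki_F_skew_commute[of s ?s1 t] K_F_skew_commute[of ?s1 ?s1 t] assms
    by (intro skew_commute_mult_left) (auto simp: delta_def power_int_minus)
  have "sbr (oddpair m s ?s1) (oddpair m s t) (E s ?s1) (F s t)
      = sbr (s = m) (oddpair m ?s1 t \<noteq> (s = m)) (e s) (qcomm ?q1 ?G (f s))"
    using assms by (simp add: oddpair_adjacent oddpair_Suc_left E_adjacent F_Suc_left)
  also have "\<dots> = qcomm ?q1 ?G ?H"
    unfolding sbr_qcomm_right by (simp add: e_G even_G qcomm_def ssign_def)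
  also have "\<dots> = smul (?d * (1 - ?q1 * ?q1)) (?G * ?P1)"
    using assms P1_G P2_G q1
    by (simp add: sbr_e_f_same qcomm_distribs qcomm_skew_commute_swapped smul_distribs right_diff_distrib)
  also have "\<dots> = smul (if s = m then 1 else -1) (?P1 * ?G)"
  proof -
    have "?d * (1 - ?q1 * ?q1) = (if s = m then 1 else -1) * ?q1"
      unfolding adjacent_coeff[OF q_nonzero, of s m, symmetric]
      using q_at_bracket_nonzero[OF q_nonzero q_square_neq_1, of m s] by simp
    then show ?thesis
      using P1_G by (simp add: skew_commute_def)
  qed
  finally show ?thesis
    unfolding common_start_rel_def by (simp add: oddpair_adjacent)
qed

lemma sbr_E_f_start:
  assumes "1 \<le> s" "Suc s < j" "j \<le> m + n"
  shows "sbr (oddpair m s j) (s = m) (E s j) (f s)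
    = smul (if s = m then 1 else -1) (E (Suc s) j * (Ki s * K (Suc s)))"
proof -
  let ?s1 = "Suc s" and ?q1 = "qa (Suc s)" and ?d = "inverse (qa s - inverse (qa s))"
  define A where "A = E ?s1 j"
  define P1 where "P1 = K s * Ki ?s1"
  define P2 where "P2 = Ki s * K ?s1"
  have A_f: "A * f s = f s * A"
    using f_E_commute[of s ?s1 j] assms by (simp add: A_def)
  have P1_A: "skew_commute (1 * inverse ?q1) P1 A"
    using K_E_skew_commute[of s ?s1 j] Ki_E_skew_commute[of ?s1 ?s1 j] assms unfolding A_def P1_def
    by (intro skew_commute_mult_left) (auto simp: delta_def power_int_minus)
  have P2_A: "skew_commute (1 * ?q1) P2 A"
    using Ki_E_skew_commute[of s ?s1 j] K_E_skew_commute[of ?s1 ?s1 j] assms unfolding A_def P2_def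
    by (intro skew_commute_mult_left) (auto simp: delta_def)
  have parity: "oddpair m s j \<and> s = m \<longleftrightarrow> s = m \<and> s = m"
    using assms by (auto simp: oddpair_def)
  have H: "sbr (oddpair m s j) (s = m) (e s) (f s) = smul ?d (P1 - P2)"
    using sbr_e_f_same[of s] assms unfolding sbr_parity_cong[OF parity] P1_def P2_def by simp
  have "sbr (oddpair m s j) (s = m) (E s j) (f s) = qcomm (inverse ?q1) (smul ?d (P1 - P2)) A"
    using assms by (simp add: E_Suc_left A_def[symmetric] sbr_qcomm_left'[OF A_f] H)
  also have "\<dots> = smul (?d * (inverse ?q1 - ?q1)) (A * P2)"
    using P1_A P2_A by (simp add: qcomm_distribs_left qcomm_skew_commute smul_distribs right_diff_distrib)
  also have "?d * (inverse ?q1 - ?q1) = (if s = m then 1 else -1)"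
    using commutator_coeff[OF q_nonzero, of s m]
      q_at_bracket_nonzero[OF q_nonzero q_square_neq_1, of m s]
    by (auto simp: field_simps split: if_splits)
  finally show ?thesis
    by (simp add: A_def P2_def)
qed

lemma sbr_E_F_common_start_expand:
  assumes "1 \<le> s" "Suc s < j" "j < t" "t \<le> m + n" "crossing_rel s (Suc s) j t"
  shows "sbr (oddpair m s j) (oddpair m s t) (E s j) (F s t)
    = smul (inverse (qa j) - qa j) (K (Suc s) * Ki j * F j t * sbr (s = m) (s = m) (e s) (f s))
      - smul (if s = m then 1 else -1)
          (sbr (oddpair m (Suc s) j) (oddpair m (Suc s) t) (E (Suc s) j) (F (Suc s) t) * (Ki s * K (Suc s)))"
proof -
  let ?s1 = "Suc s" and ?q1 = "qa (Suc s)" and ?p = "oddpair m s j"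
  define \<zeta> :: 'k where "\<zeta> = (if s = m then 1 else -1)"
  define l where "l = inverse (qa j) - qa j"
  define A where "A = E ?s1 j"
  define G where "G = F ?s1 t"
  define R where "R = K ?s1 * Ki j * F j t"
  define P where "P = Ki s * K ?s1"
  define T where "T = sbr ?p (oddpair m ?s1 t) (E s j) G"
  define Z where "Z = sbr ?p (s = m) (E s j) (f s)"
  have q1: "?q1 \<noteq> 0"
    by (simp add: q_at_nonzero q_nonzero)
  have parity: "?p \<and> s = m \<longleftrightarrow> s = m" "?p \<and> oddpair m ?s1 t \<longleftrightarrow> oddpair m ?s1 j \<and> oddpair m ?s1 t"
    using assms by (auto simp: oddpair_def)
  have T: "T = smul l (R * e s)"
    using assms(5) by (simp add: crossing_rel_def E_adjacent T_def G_def R_def l_def)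
  have Z: "Z = smul \<zeta> (A * P)"
    using sbr_E_f_start[of s j] assms by (simp add: Z_def A_def P_def \<zeta>_def)
  have f_R: "skew_commute (inverse ?q1) (f s) R"
    using f_skew_commute_K_Ki_F[of s ?s1 j t] assms by (simp add: R_def delta_def power_int_minus)
  have P_G: "skew_commute (1 * inverse ?q1) P G"
    using Ki_F_skew_commute[of s ?s1 t] K_F_skew_commute[of ?s1 ?s1 t] assms unfolding P_def G_def
    by (intro skew_commute_mult_left) (auto simp: delta_def power_int_minus)
  have "sbr ?p (oddpair m s t) (E s j) (F s t)
      = sbr ?p (oddpair m ?s1 t \<noteq> (s = m)) (E s j) (qcomm ?q1 G (f s))"
    using assms by (simp add: oddpair_Suc_left F_Suc_left G_def)
  also have "\<dots> = (T * f s - smul ?q1 (ssign (s = m) * (f s * T)))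
      + (ssign (?p \<and> oddpair m ?s1 t) * (G * Z) - smul ?q1 (Z * G))"
    unfolding sbr_qcomm_right parity(1) T_def Z_def by (simp add: smul_distribs algebra_simps)
  also have "T * f s - smul ?q1 (ssign (s = m) * (f s * T))
      = smul l (R * sbr (s = m) (s = m) (e s) (f s))"
    using skew_commute_swap[OF f_R] q1
    by (simp add: T sbr_ssign mult.left_commute[of ?q1 l] smul_distribs right_diff_distrib mult.assoc
        mult_ssign_left_commute)
  also have "ssign (?p \<and> oddpair m ?s1 t) * (G * Z) - smul ?q1 (Z * G)
      = - smul \<zeta> ((A * G - ssign (?p \<and> oddpair m ?s1 t) * (G * A)) * P)"
    using skew_commute_swap[OF P_G] q1
    by (simp add: Z mult.left_commute[of ?q1 \<zeta>] smul_distribs algebra_simps mult_ssign_left_commute)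
  finally show ?thesis
    by (simp add: sbr_ssign parity(2) \<zeta>_def l_def A_def G_def R_def P_def)
qed

lemma common_start_rel_Suc_left:
  assumes "1 \<le> s" "Suc s < j" "j < t" "t \<le> m + n" "common_start_rel (Suc s) j t"
  shows "common_start_rel s j t"
proof -
  let ?s1 = "Suc s"
  define \<zeta> :: 'k where "\<zeta> = (if s = m then 1 else -1)"
  define \<mu> :: 'k where "\<mu> = (if oddpair m s j then 1 else -1)"
  define \<mu>1 :: 'k where "\<mu>1 = (if oddpair m ?s1 j then 1 else -1)"
  define l where "l = inverse (qa j) - qa j"
  define d where "d = inverse (qa s - inverse (qa s))"
  define R where "R = K ?s1 * Ki j * F j t"
  have "sbr (oddpair m s j) (oddpair m s t) (E s j) (F s t)
      = smul l (R * smul d (K s * Ki ?s1 - Ki s * K ?s1)) - smul \<zeta> (smul \<mu>1 R * (Ki s * K ?s1))"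
    using sbr_E_F_common_start_expand[OF assms(1-4) crossing_rel_adjacent[OF assms]] assms(5)
      sbr_e_f_same[of s] assms
    by (simp add: common_start_rel_def \<zeta>_def \<mu>1_def l_def d_def R_def)
  also have "\<dots> = smul (l * d) (R * (K s * Ki ?s1)) - smul (l * d + \<zeta> * \<mu>1) (R * (Ki s * K ?s1))"
    by (simp add: smul_distribs algebra_simps)
  also have "l * d = \<mu>"
    using crossing_coeff[OF q_nonzero, of s j m]
      q_at_bracket_nonzero[OF q_nonzero q_square_neq_1, of m s] assms
    by (simp add: l_def d_def \<mu>_def field_simps)
  also have "\<zeta> * \<mu>1 = - \<mu>"
    using assms by (auto simp: \<zeta>_def \<mu>_def \<mu>1_def oddpair_def)
  also have "R * (K s * Ki ?s1) = K s * Ki j * F j t"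
    using K_Ki_F_times_K_Ki[of s j ?s1 t] assms by (simp add: R_def)
  finally show ?thesis
    by (simp add: common_start_rel_def \<mu>_def)
qed

lemma common_start_rel_all:
  assumes "1 \<le> s" "s < j" "j < t" "t \<le> m + n"
  shows "common_start_rel s j t"
proof -
  obtain j' where j: "j = Suc j'"
    using assms(2) by (cases j) auto
  have "s \<le> j'"
    using assms(2) j by simp
  then show ?thesis
    unfolding j
  proof (induction s rule: inc_induct)
    case base
    show ?case
      using assms j by (intro common_start_rel_adjacent) auto
  next
    case (step k)
    then show ?case
      using assms j by (intro common_start_rel_Suc_left[of k]) auto
  qed
qed

lemma crossing_rel_all:
  assumes "1 \<le> i" "i < s" "s < j" "j < t" "t \<le> m + n"
  shows "crossing_rel i s j t"
proof -
  obtain s' where s: "s = Suc s'"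
    using assms(2) by (cases s) auto
  have "i \<le> s'"
    using assms(2) s by simp
  then show ?thesis
    unfolding s
  proof (induction i rule: inc_induct)
    case base
    show ?case
      using assms s by (intro crossing_rel_adjacent common_start_rel_all) auto
  next
    case (step k)
    then show ?case
      using assms s by (intro crossing_rel_Suc_left[of k]) auto
  qed
qed

theorem sbr_E_F_crossing:
  assumes "1 \<le> i" "i < s" "s < j" "j < t" "t \<le> m + n"
  shows "sbr (oddpair m i j) (oddpair m s t) (E i j) (F s t)
    = smul (inverse (qa j) - qa j) (K s * Ki j * F j t * E i s)"
  using crossing_rel_all[OF assms] by (simp add: crossing_rel_def)

section \<open>The second identity by symmetry\<close>

lemma q_at_inverse_fun: "q_at (inverse q) m = (\<lambda>i. inverse (qa i))"
  by (simp add: fun_eq_iff q_at_inverse)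

lemma Opp_Ki_f_K:
  assumes "i \<in> {1..m+n}" "j \<in> {1..<m+n}"
  shows "Opp (Ki i) * Opp (f j) * Opp (K i)
    = Opp (emb (q_at (inverse q) m i powi (delta i j - delta i (j + 1)))) * Opp (f j)"
proof -
  have "K i * (f j * Ki i) = f j * emb (inverse (qa i) powi (delta i j - delta i (j + 1)))"
    using K_f_Ki[OF assms] by (simp add: mult.assoc emb_central power_int_inverse flip: power_int_minus)
  then show ?thesis
    by (simp add: Opp_arith q_at_inverse)
qed

lemma Opp_Ki_e_K:
  assumes "i \<in> {1..m+n}" "j \<in> {1..<m+n}"
  shows "Opp (Ki i) * Opp (e j) * Opp (K i)
    = Opp (emb (q_at (inverse q) m i powi - (delta i j - delta i (j + 1)))) * Opp (e j)"
proof -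
  have "K i * (e j * Ki i) = e j * emb (inverse (qa i) powi - (delta i j - delta i (j + 1)))"
    using K_e_Ki[OF assms] by (simp add: mult.assoc emb_central power_int_inverse flip: power_int_minus)
  then show ?thesis
    by (simp add: Opp_arith q_at_inverse)
qed

lemma sbr_Opp_f_e:
  assumes "i \<in> {1..<m+n}" "j \<in> {1..<m+n}"
  shows "sbr (i = m) (j = m) (Opp (f i)) (Opp (e j)) =
    (if i = j
     then Opp (emb (inverse (q_at (inverse q) m i - inverse (q_at (inverse q) m i)))) *
          (Opp (Ki i) * Opp (K (i + 1)) - Opp (K i) * Opp (Ki (i + 1)))
     else 0)"
proof (cases "i = j")
  case True
  have "K i * Ki (Suc i) = Ki (Suc i) * K i" "Ki i * K (Suc i) = K (Suc i) * Ki i"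
    using assms Ki_K_commute[of "Suc i" i] Ki_K_commute[of i "Suc i"] by (simp_all add: skew_commute_1)
  moreover have "inverse (inverse x - x) = - inverse (x - inverse x)" for x :: 'k
    by (simp flip: inverse_minus_eq)
  ultimately show ?thesis
    using sbr_e_f[OF assms(2,1)] True
    by (simp add: sbr_Opp Opp_arith q_at_inverse emb_minus emb_central algebra_simps)
next
  case False
  then show ?thesis
    using sbr_e_f[OF assms(2,1)] by (simp add: sbr_Opp Opp_arith)
qed

lemma uq_relations_opp:
  "uq_relations m n (inverse q) (\<lambda>c. Opp (emb c))
     (\<lambda>i. Opp (Ki i)) (\<lambda>i. Opp (K i)) (\<lambda>i. Opp (f i)) (\<lambda>i. Opp (e i))"
proof unfold_locales
  show "inverse q \<noteq> 0" "inverse q * inverse q \<noteq> 1"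
    using q_nonzero q_square_neq_1 by (simp_all flip: inverse_mult_distrib)
  show "Opp (emb 1) = 1" "Opp (emb (a + b)) = Opp (emb a) + Opp (emb b)" for a b
    by (simp_all add: emb_1 emb_add Opp_arith)
  show "Opp (emb (a * b)) = Opp (emb a) * Opp (emb b)" for a b
    by (simp add: Opp_arith flip: emb_mult) (simp add: mult.commute)
  show "Opp (emb a) * x = x * Opp (emb a)" for a x
    by (cases x) (simp add: Opp_arith emb_central)
  show "Opp (Ki i) * Opp (Ki j) = Opp (Ki j) * Opp (Ki i)" if "i \<in> {1..m+n}" "j \<in> {1..m+n}" for i j
    using Ki_Ki_commute[OF that] by (simp add: Opp_arith skew_commute_1)
  show "Opp (Ki i) * Opp (K i) = 1" "Opp (K i) * Opp (Ki i) = 1" if "i \<in> {1..m+n}" for i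
    using that by (simp_all add: Opp_arith K_Ki Ki_K)
  show "Opp (f i) * Opp (f j) = Opp (f j) * Opp (f i)"
    "Opp (e i) * Opp (e j) = Opp (e j) * Opp (e i)"
    if "i \<in> {1..<m+n}" "j \<in> {1..<m+n}" "i + 1 < j \<or> j + 1 < i" for i j
    using f_f_far[OF that] e_e_far[OF that] by (simp_all add: Opp_arith)
qed (fact Opp_Ki_f_K Opp_Ki_e_K sbr_Opp_f_e)+

theorem sbr_E_F_crossing_dual:
  assumes "1 \<le> i" "i < s" "s < j" "j < t" "t \<le> m + n"
  shows "sbr (oddpair m s t) (oddpair m i j) (E s t) (F i j)
    = smul (qa j - inverse (qa j)) (F i s * E j t * Ki s * K j)"
proof -
  interpret opp: uq_relations m n "inverse q" "\<lambda>c. Opp (emb c)"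
      "\<lambda>i. Opp (Ki i)" "\<lambda>i. Opp (K i)" "\<lambda>i. Opp (f i)" "\<lambda>i. Opp (e i)"
    by (rule uq_relations_opp)
  have E_opp: "opp.E a b = Opp (F a b)" and F_opp: "opp.F a b = Opp (E a b)" for a b
    by (simp_all add: opp.E_def opp.F_def E_def F_def q_at_inverse_fun E_root_Opp F_root_Opp emb_central)
  have "Ki s * K j = K j * Ki s"
    using Ki_K_commute[of s j] assms by (simp add: skew_commute_1)
  then show ?thesis
    using opp.sbr_E_F_crossing[OF assms]
    by (simp add: E_opp F_opp sbr_Opp opp.smul_def smul_def Opp_arith q_at_inverse emb_central mult.assoc)
qed

end

lemma uq_alg_imp_uq_relations:
  assumes "uq_alg m n emb K Ki e f"
  shows "uq_relations m n qq emb K Ki e f"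
proof -
  note rels = assms[unfolded uq_alg_def qi_eq_q_at]
  show ?thesis
    by unfold_locales (use rels qq_nonzero qq_square_neq_1 in \<open>meson\<close>)+
qed

theorem lemma4p3:
  fixes emb :: "cq \<Rightarrow> 'a::ring_1"
    and K Ki e f :: "nat \<Rightarrow> 'a"
    and m n i s j t :: nat
  assumes "1 \<le> m" and "1 \<le> n"
    and "uq_alg m n emb K Ki e f"
    and "1 \<le> i" and "i < s" and "s < j" and "j < t" and "t \<le> m + n"
  shows "(sbr (oddpair m i j) (oddpair m s t) (Eel m emb e i j) (Fel m emb f s t)
           = emb (inverse (qi m j) - qi m j) * K s * Ki j * Fel m emb f j t * Eel m emb e i s)
       \<and> (sbr (oddpair m s t) (oddpair m i j) (Eel m emb e s t) (Fel m emb f i j)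
           = emb (qi m j - inverse (qi m j)) * Fel m emb f i s * Eel m emb e j t * Ki s * K j)"
proof -
  interpret uq_relations m n qq emb K Ki e f
    using assms(3) by (rule uq_alg_imp_uq_relations)
  have "Eel m emb e = E" "Fel m emb f = F"
    by (simp_all add: fun_eq_iff E_def F_def Eel_eq_E_root Fel_eq_F_root qi_eq_q_at)
  then show ?thesis
    using sbr_E_F_crossing[OF assms(4-8)] sbr_E_F_crossing_dual[OF assms(4-8)]
    by (simp add: smul_def qi_eq_q_at mult.assoc)
qed

end
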